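(* For every network $\mathcal N=(\mathcal G,S,\rho)$, every prime power $q$ and every nonnegative integer security level $r$, the secure computing capacity of the algebraic sum $f$ over $\mathbb F_q$ satisfies $$\widehat{\mathcal C}(\mathcal N,f,r)\le \min_{\substack{(W,C)\in\mathcal W_r\times\Lambda(\mathcal N):\\ W\subseteq C,\ D_W\subseteq I_C}}\big(|C|-|W|\big).$$
   Context: Network model: $\mathcal G=(\mathcal V,\mathcal E)$ is a finite directed acyclic graph (multiple edges between two nodes allowed). For $e\in\mathcal E$, $\mathrm{tail}(e)$ and $\mathrm{head}(e)$ denote its tail and head; $\mathcal E_{\rm in}(u)$, $\mathcal E_{\rm out}(u)$ are the sets of input and output edges of node $u$. A path from node $u$ (or edge $e_1$) to node $v$ (or edge $e_m$) is a sequence of edges $(e_1,\dots,e_m)$ with $\mathrm{tail}(e_1)=u$, $\mathrm{head}(e_m)=v$, $\mathrm{tail}(e_i)=\mathrm{head}(e_{i-1})$; a single edge is a path from itself to itself. For a node $\sigma$ and edge $e$, $\sigma\to e$ means there is a path from $\sigma$ whose last edge is $e$. $S=\{\sigma_1,\dots,\sigma_s\}\subset\mathcal V$ is the set of source nodes, each with no input edges; $\rho\in\mathcal V\setminus S$ is the sink, with no output edges; every node $u\ne\rho$ has a directed path to $\rho$; the sources are exactly the nodes without input edges. $\mathcal N=(\mathcal G,S,\rho)$. For disjoint node sets $U,V$, a cut separating $V$ from $U$ is an edge set $C$ such that after deleting $C$ there is no path from any $u\in U$ to any $v\in V$; $\mathrm{mincut}(U,V)$ is the minimum size of such a cut, and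 $\mathrm{mincut}(u,v)$ for singletons. Cut sets: for $C\subseteq\mathcal E$, $D_C=\{\sigma\in S:\exists e\in C,\ \sigma\to e\}$, $I_C=\{\sigma\in S:$ there is no path from $\sigma$ to $\rho$ after deleting the edges of $C\}$; $\Lambda(\mathcal N)=\{C\subseteq\mathcal E: I_C\neq\emptyset\}$. For a nonnegative integer $r$ (the security level), $\mathcal W_r=\{W\subseteq\mathcal E:|W|\le r\}$ (it contains $\emptyset$). Secure model: $q$ is a prime power and $f:\mathbb F_q^s\to\mathbb F_q$, $f(m_1,\dots,m_s)=\sum_{i=1}^s m_i$; each edge carries one symbol of $\mathbb F_q$ per network use. For positive integers $\ell,n$, an $(\ell,n)$ secure network code is as follows. Source $\sigma_i$ holds a message $\mathbf M_i=(M_{i,1},\dots,M_{i,\ell})$ of i.i.d. uniform elements of $\mathbb F_q$ and a key $\mathbf K_i$ uniform on a finite set $\mathcal K_i$ (chosen as part of the code); all $\mathbf M_i,\mathbf K_i$ are mutually independent. For each edge $e$ there is a local encoding function: if $\mathrm{tail}(e)=\sigma_i$, a map $\mathbb F_q^\ell\times\mathcal K_i\to\mathbb F_q^n$ applied to $(\mathbf m_i,\mathbf k_i)$; otherwise a map $\prod_{d\in\mathcal E_{\rm in}(\mathrm{tail}(e))}\mathbb F_q^n\to\mathbb F_q^n$ applied to the messages on the input edges of $\mathrm{tail}(e)$. There is a decoding function $\psi:\prod_{d\in\mathcal E_{\rm in}(\rho)}\mathbb F_q^n\to\mathbb F_q^\ell$. Recursively, the message $\mathbf Y_e$ on each edge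 is a function of $(\mathbf M_S,\mathbf K_S)$, where $\mathbf M_S=(\mathbf M_1,\dots,\mathbf M_s)$, $\mathbf K_S=(\mathbf K_1,\dots,\mathbf K_s)$; $\mathbf Y_W=(\mathbf Y_e:e\in W)$. The code is admissible (for security level $r$) if (computability) for all values $\mathbf m_S,\mathbf k_S$ the decoder outputs $\sum_{i=1}^s\mathbf m_i$ (componentwise sum in $\mathbb F_q^\ell$), and (security) $I(\mathbf Y_W;\mathbf M_S)=0$ for every $W\in\mathcal W_r$. Its rate is $\ell/n$. $R\ge0$ is achievable if for every $\epsilon>0$ there is an admissible $(\ell,n)$ code with $\ell/n>R-\epsilon$. The secure computing capacity $\widehat{\mathcal C}(\mathcal N,f,r)$ is the maximum achievable rate. *)

theory Defs
  imports Complex_Main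
begin

record ('v, 'e) network =
  nodes   :: "'v set"
  edges   :: "'e set"
  tl      :: "'e \<Rightarrow> 'v"
  hd      :: "'e \<Rightarrow> 'v"
  sources :: "'v set"
  sink    :: "'v"

definition in_edges :: "('v, 'e) network \<Rightarrow> 'v \<Rightarrow> 'e set" where
  "in_edges N u = {e \<in> edges N. hd N e = u}"

definition out_edges :: "('v, 'e) network \<Rightarrow> 'v \<Rightarrow> 'e set" where
  "out_edges N u = {e \<in> edges N. tl N e = u}"

definition path_in :: "('v, 'e) network \<Rightarrow> 'e set \<Rightarrow> 'e list \<Rightarrow> bool" where
  "path_in N A es \<longleftrightarrow> es \<noteq> [] \<and> set es \<subseteq> A \<and>
     (\<forall>i. Suc i < length es \<longrightarrow> tl N (es ! Suc i) = hd N (es ! i))"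

definition node_path_in :: "('v, 'e) network \<Rightarrow> 'e set \<Rightarrow> 'v \<Rightarrow> 'v \<Rightarrow> bool" where
  "node_path_in N A u v \<longleftrightarrow>
     (\<exists>es. path_in N A es \<and> tl N (List.hd es) = u \<and> hd N (List.last es) = v)"

definition reaches_edge :: "('v, 'e) network \<Rightarrow> 'v \<Rightarrow> 'e \<Rightarrow> bool" where
  "reaches_edge N \<sigma> e \<longleftrightarrow>
     (\<exists>es. path_in N (edges N) es \<and> tl N (List.hd es) = \<sigma> \<and> List.last es = e)"

definition acyclic_net :: "('v, 'e) network \<Rightarrow> bool" where
  "acyclic_net N \<longleftrightarrow>
     \<not> (\<exists>es. path_in N (edges N) es \<and> hd N (List.last es) = tl N (List.hd es))"

definition wf_network :: "('v, 'e) network \<Rightarrow> bool" where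
  "wf_network N \<longleftrightarrow>
     finite (nodes N) \<and> finite (edges N) \<and>
     (\<forall>e \<in> edges N. tl N e \<in> nodes N \<and> hd N e \<in> nodes N) \<and>
     acyclic_net N \<and>
     sources N \<subseteq> nodes N \<and>
     sink N \<in> nodes N \<and> sink N \<notin> sources N \<and>
     out_edges N (sink N) = {} \<and>
     (\<forall>u \<in> nodes N. u \<noteq> sink N \<longrightarrow> node_path_in N (edges N) u (sink N)) \<and>
     (\<forall>u \<in> nodes N. u \<in> sources N \<longleftrightarrow> in_edges N u = {})"

definition D_set :: "('v, 'e) network \<Rightarrow> 'e set \<Rightarrow> 'v set" where
  "D_set N C = {\<sigma> \<in> sources N. \<exists>e \<in> C. reaches_edge N \<sigma> e}"

definition I_set :: "('v, 'e) network \<Rightarrow> 'e set \<Rightarrow> 'v set" where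
  "I_set N C = {\<sigma> \<in> sources N. \<not> node_path_in N (edges N - C) \<sigma> (sink N)}"

definition Lambda_set :: "('v, 'e) network \<Rightarrow> 'e set set" where
  "Lambda_set N = {C. C \<subseteq> edges N \<and> I_set N C \<noteq> {}}"

definition W_set :: "('v, 'e) network \<Rightarrow> nat \<Rightarrow> 'e set set" where
  "W_set N r = {W. W \<subseteq> edges N \<and> card W \<le> r}"

definition cut_bound :: "('v, 'e) network \<Rightarrow> nat \<Rightarrow> real" where
  "cut_bound N r = Min {real (card C) - real (card W) | W C.
      W \<in> W_set N r \<and> C \<in> Lambda_set N \<and> W \<subseteq> C \<and> D_set N W \<subseteq> I_set N C}"

text \<open>Vectors in F_q^l are lists of length l.  Keys of source sigma are drawn
  uniformly from a finite nonempty set keys sigma of natural numbers (any finite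
  key set can be relabelled this way).  enc_src e is the local encoding function
  of an edge leaving a source, applied to (message, key) of its tail; enc e is
  the local encoding function of any other edge, applied to the messages on the
  input edges of its tail; dec is the decoding function at the sink.\<close>
record ('v, 'e, 'f) scode =
  keys    :: "'v \<Rightarrow> nat set"
  enc_src :: "'e \<Rightarrow> 'f list \<Rightarrow> nat \<Rightarrow> 'f list"
  enc     :: "'e \<Rightarrow> ('e \<Rightarrow> 'f list) \<Rightarrow> 'f list"
  dec     :: "('e \<Rightarrow> 'f list) \<Rightarrow> 'f list"

definition restr :: "'e set \<Rightarrow> ('e \<Rightarrow> 'f list) \<Rightarrow> 'e \<Rightarrow> 'f list" where
  "restr A Y = (\<lambda>d. if d \<in> A then Y d else [])"

text \<open>Since the graph is acyclic, iterating it
  card(edges) times from any start gives the recursively defined edge messages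
  Y_e as functions of the source messages m and keys k.\<close>
definition code_step :: "('v, 'e) network \<Rightarrow> ('v, 'e, 'f) scode \<Rightarrow>
    ('v \<Rightarrow> 'f list) \<Rightarrow> ('v \<Rightarrow> nat) \<Rightarrow> ('e \<Rightarrow> 'f list) \<Rightarrow> ('e \<Rightarrow> 'f list)" where
  "code_step N c m k Y = (\<lambda>e.
     if e \<in> edges N then
       (if tl N e \<in> sources N then enc_src c e (m (tl N e)) (k (tl N e))
        else enc c e (restr (in_edges N (tl N e)) Y))
     else [])"

definition edge_msg :: "('v, 'e) network \<Rightarrow> ('v, 'e, 'f) scode \<Rightarrow>
    ('v \<Rightarrow> 'f list) \<Rightarrow> ('v \<Rightarrow> nat) \<Rightarrow> 'e \<Rightarrow> 'f list" where
  "edge_msg N c m k = (code_step N c m k ^^ card (edges N)) (\<lambda>_. [])"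

text \<open>The probability distribution is uniform on this finite set, which is exactly
  the joint law of independent uniform messages and keys.\<close>
definition sample_space :: "('v, 'e) network \<Rightarrow> ('v, 'e, 'f) scode \<Rightarrow> nat \<Rightarrow>
    (('v \<Rightarrow> 'f list) \<times> ('v \<Rightarrow> nat)) set" where
  "sample_space N c l = {(m, k).
     (\<forall>\<sigma>. (\<sigma> \<in> sources N \<longrightarrow> length (m \<sigma>) = l \<and> k \<sigma> \<in> keys c \<sigma>) \<and>
          (\<sigma> \<notin> sources N \<longrightarrow> m \<sigma> = [] \<and> k \<sigma> = 0))}"

definition uprob :: "'a set \<Rightarrow> ('a \<Rightarrow> bool) \<Rightarrow> real" where
  "uprob \<Omega> P = real (card {\<omega> \<in> \<Omega>. P \<omega>}) / real (card \<Omega>)"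

definition mutual_info :: "'a set \<Rightarrow> ('a \<Rightarrow> 'b) \<Rightarrow> ('a \<Rightarrow> 'c) \<Rightarrow> real" where
  "mutual_info \<Omega> X Y =
     (\<Sum>(x, y) \<in> (\<lambda>\<omega>. (X \<omega>, Y \<omega>)) ` \<Omega>.
        uprob \<Omega> (\<lambda>\<omega>. X \<omega> = x \<and> Y \<omega> = y) *
        log 2 (uprob \<Omega> (\<lambda>\<omega>. X \<omega> = x \<and> Y \<omega> = y) /
               (uprob \<Omega> (\<lambda>\<omega>. X \<omega> = x) * uprob \<Omega> (\<lambda>\<omega>. Y \<omega> = y))))"

definition alg_sum :: "('v, 'e) network \<Rightarrow> nat \<Rightarrow> ('v \<Rightarrow> 'f::field list) \<Rightarrow> 'f list" where
  "alg_sum N l m = map (\<lambda>j. \<Sum>\<sigma> \<in> sources N. m \<sigma> ! j) [0..<l]"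

definition admissible :: "('v, 'e) network \<Rightarrow> nat \<Rightarrow> nat \<Rightarrow> nat \<Rightarrow>
    ('v, 'e, 'f::{finite,field}) scode \<Rightarrow> bool" where
  "admissible N r l n c \<longleftrightarrow>
     0 < l \<and> 0 < n \<and>
     (\<forall>\<sigma> \<in> sources N. finite (keys c \<sigma>) \<and> keys c \<sigma> \<noteq> {}) \<and>
     (\<forall>e x key. length (enc_src c e x key) = n) \<and>
     (\<forall>e Y. length (enc c e Y) = n) \<and>
     \<comment> \<open>computability\<close>
     (\<forall>(m, k) \<in> sample_space N c l.
        dec c (restr (in_edges N (sink N)) (edge_msg N c m k)) = alg_sum N l m) \<and>
     \<comment> \<open>security\<close>
     (\<forall>W \<in> W_set N r.
        mutual_info (sample_space N c l)
          (\<lambda>(m, k). restr W (edge_msg N c m k)) (\<lambda>(m, k). m) = 0)"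

definition achievable :: "'f::{finite,field} itself \<Rightarrow> ('v, 'e) network \<Rightarrow> nat \<Rightarrow> real \<Rightarrow> bool" where
  "achievable F N r R \<longleftrightarrow> 0 \<le> R \<and>
     (\<forall>\<epsilon>>0. \<exists>l n (c :: ('v, 'e, 'f) scode).
        admissible N r l n c \<and> real l / real n > R - \<epsilon>)"

end

theory Submission
  imports Defs "HOL-Library.FuncSet"
begin

text \<open>Fix a cut C with I_C nonempty and an eavesdropped set W \<subseteq> C with D_W \<subseteq> I_C, and pick a
  source \<sigma>0 \<in> I_C.  Zero mutual information between the messages on W and the sources means
  every source message is compatible with every observation on W.  So as the message of \<sigma>0
  ranges over all of F_q^l, keys can be chosen (changing only sources in I_C, which is harmless
  for W since W only sees D_W) that keep the messages on W fixed.  All sources outside I_C are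
  then fixed too, so the sink inputs, hence the computed sum and hence the message of \<sigma>0, are
  determined by the messages on C - W.  This gives q^l \<le> q^(n |C - W|), i.e. l/n \<le> |C| - |W|.\<close>

lemma wf_networkD:
  assumes "wf_network N"
  shows "finite (edges N)" "finite (sources N)" "acyclic_net N"
    and "sink N \<in> nodes N" "sink N \<notin> sources N"
    and "e \<in> edges N \<Longrightarrow> tl N e \<in> nodes N"
    and "u \<in> nodes N \<Longrightarrow> u \<in> sources N \<longleftrightarrow> in_edges N u = {}"
  using assms finite_subset[of "sources N" "nodes N"] unfolding wf_network_def by blast+

lemma path_in_snoc:
  assumes "path_in N A es" "e \<in> A" "tl N e = hd N (List.last es)"
  shows "path_in N A (es @ [e])"
  using assms unfolding path_in_def
  by (auto simp: nth_append last_conv_nth less_Suc_eq dest!: sym[of "Suc _"])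

lemma path_in_Cons:
  assumes "path_in N A es" "d \<in> A" "tl N (List.hd es) = hd N d"
  shows "path_in N A (d # es)"
  using assms unfolding path_in_def
  by (auto simp: hd_conv_nth nth_Cons split: nat.split)

definition feeds :: "('v, 'e) network \<Rightarrow> ('e \<times> 'e) set" where
  "feeds N = {(d, e). d \<in> edges N \<and> e \<in> edges N \<and> hd N d = tl N e}"

lemma trancl_feeds_imp_path:
  assumes "(d, e) \<in> (feeds N)\<^sup>+"
  shows "\<exists>es. path_in N (edges N) es \<and> List.hd es = d \<and> hd N (List.last es) = tl N e"
  using assms
proof (induction rule: trancl_induct)
  case (base e)
  then show ?case by (intro exI[of _ "[d]"]) (auto simp: feeds_def path_in_def)
next
  case (step e f)
  then obtain es where es: "path_in N (edges N) es" "List.hd es = d" "hd N (List.last es) = tl N e"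
    by blast
  then have "path_in N (edges N) (es @ [e])"
    using step.hyps(2) by (intro path_in_snoc) (auto simp: feeds_def)
  with es step.hyps(2) show ?case
    by (intro exI[of _ "es @ [e]"]) (auto simp: feeds_def path_in_def)
qed

lemma acyclic_feeds: "acyclic_net N \<Longrightarrow> acyclic (feeds N)"
  unfolding acyclic_def acyclic_net_def using trancl_feeds_imp_path by metis

lemma wf_feeds:
  assumes "finite (edges N)" "acyclic_net N"
  shows "wf (feeds N)"
proof (rule finite_acyclic_wf)
  show "finite (feeds N)"
    by (rule finite_subset[of _ "edges N \<times> edges N"]) (use assms(1) in \<open>auto simp: feeds_def\<close>)
qed (rule acyclic_feeds[OF assms(2)])

text \<open>After more than height N e rounds of encoding, the message on e is settled.\<close>
definition height :: "('v, 'e) network \<Rightarrow> 'e \<Rightarrow> nat" where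
  "height N e = card {d. (d, e) \<in> (feeds N)\<^sup>+}"

lemma upstream_subset_edges: "{d. (d, e) \<in> (feeds N)\<^sup>+} \<subseteq> edges N"
  by (auto elim: converse_tranclE simp: feeds_def)

lemma height_less_height:
  assumes "finite (edges N)" "acyclic_net N" "(d, e) \<in> feeds N"
  shows "height N d < height N e"
proof -
  have "(d, d) \<notin> (feeds N)\<^sup>+"
    using acyclic_feeds[OF assms(2)] by (auto simp: acyclic_def)
  moreover have "(d, e) \<in> (feeds N)\<^sup>+"
    using assms(3) by blast
  ultimately have "{x. (x, d) \<in> (feeds N)\<^sup>+} \<subset> {x. (x, e) \<in> (feeds N)\<^sup>+}"
    using trancl_into_trancl[OF _ assms(3)] by blast
  then show ?thesis
    unfolding height_def
    by (intro psubset_card_mono finite_subset[OF upstream_subset_edges assms(1)])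
qed

lemma height_less_card_edges:
  assumes "finite (edges N)" "acyclic_net N" "e \<in> edges N"
  shows "height N e < card (edges N)"
proof -
  have "(e, e) \<notin> (feeds N)\<^sup>+"
    using acyclic_feeds[OF assms(2)] by (auto simp: acyclic_def)
  then have "{d. (d, e) \<in> (feeds N)\<^sup>+} \<noteq> edges N"
    using assms(3) by auto
  then have "{d. (d, e) \<in> (feeds N)\<^sup>+} \<subset> edges N"
    using upstream_subset_edges by (rule psubsetI[rotated])
  then show ?thesis unfolding height_def by (rule psubset_card_mono[OF assms(1)])
qed

lemma code_step_nonedge: "e \<notin> edges N \<Longrightarrow> code_step N c m k Y e = []"
  by (simp add: code_step_def)

lemma code_step_edge:
  "e \<in> edges N \<Longrightarrow> code_step N c m k Y e =
     (if tl N e \<in> sources N then enc_src c e (m (tl N e)) (k (tl N e))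
      else enc c e (restr (in_edges N (tl N e)) Y))"
  by (simp add: code_step_def)

lemma in_edges_feeds: "e \<in> edges N \<Longrightarrow> d \<in> in_edges N (tl N e) \<Longrightarrow> (d, e) \<in> feeds N"
  by (simp add: feeds_def in_edges_def)

lemma code_step_iterate_settled:
  assumes "finite (edges N)" "acyclic_net N" "height N e < i" "height N e < j"
  shows "(code_step N c m k ^^ i) Y e = (code_step N c m k ^^ j) Y' e"
  using assms(3,4)
proof (induction e arbitrary: i j rule: measure_induct_rule[of "height N"])
  case (less e)
  obtain i' j' where ij: "i = Suc i'" "j = Suc j'"
    using less.prems by (metis less_nat_zero_code not0_implies_Suc)
  have "restr (in_edges N (tl N e)) ((code_step N c m k ^^ i') Y)
      = restr (in_edges N (tl N e)) ((code_step N c m k ^^ j') Y')" if "e \<in> edges N"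
  proof
    fix d
    show "restr (in_edges N (tl N e)) ((code_step N c m k ^^ i') Y) d
        = restr (in_edges N (tl N e)) ((code_step N c m k ^^ j') Y') d"
    proof (cases "d \<in> in_edges N (tl N e)")
      case True
      then have "height N d < height N e"
        using that by (intro height_less_height[OF assms(1,2)] in_edges_feeds)
      then have "(code_step N c m k ^^ i') Y d = (code_step N c m k ^^ j') Y' d"
        using less.prems ij by (intro less.IH) auto
      with True show ?thesis by (simp add: restr_def)
    qed (simp add: restr_def)
  qed
  then show ?case
    unfolding ij funpow.simps(2) o_apply
    by (cases "e \<in> edges N") (simp_all only: code_step_edge code_step_nonedge not_False_eq_True)
qed

lemma edge_msg_fixpoint:
  assumes "wf_network N"
  shows "code_step N c m k (edge_msg N c m k) = edge_msg N c m k"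
proof
  fix e
  show "code_step N c m k (edge_msg N c m k) e = edge_msg N c m k e"
  proof (cases "e \<in> edges N")
    case True
    then have "height N e < card (edges N)"
      using wf_networkD[OF assms] by (intro height_less_card_edges)
    then have "(code_step N c m k ^^ Suc (card (edges N))) (\<lambda>_. []) e
        = (code_step N c m k ^^ card (edges N)) (\<lambda>_. []) e"
      using wf_networkD[OF assms] by (intro code_step_iterate_settled) auto
    then show ?thesis unfolding edge_msg_def by simp
  next
    case False
    then show ?thesis
      unfolding edge_msg_def by (cases "card (edges N)") (simp_all add: code_step_nonedge)
  qed
qed

lemma edge_msg_edge:
  "wf_network N \<Longrightarrow> e \<in> edges N \<Longrightarrow> edge_msg N c m k e =
     (if tl N e \<in> sources N then enc_src c e (m (tl N e)) (k (tl N e))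
      else enc c e (restr (in_edges N (tl N e)) (edge_msg N c m k)))"
  by (metis edge_msg_fixpoint code_step_edge)

lemma edge_msg_nonedge: "wf_network N \<Longrightarrow> e \<notin> edges N \<Longrightarrow> edge_msg N c m k e = []"
  by (metis edge_msg_fixpoint code_step_nonedge)

lemma edge_msg_agree_upstream_closed:
  assumes wf: "wf_network N"
    and closed: "\<And>e. e \<in> G \<Longrightarrow> e \<in> edges N \<Longrightarrow>
        edge_msg N c m k e = edge_msg N c m' k' e \<or>
        (tl N e \<in> sources N \<and> m (tl N e) = m' (tl N e) \<and> k (tl N e) = k' (tl N e)) \<or>
        (tl N e \<notin> sources N \<and> in_edges N (tl N e) \<subseteq> G)"
    and "e \<in> G"
  shows "edge_msg N c m k e = edge_msg N c m' k' e"
  using \<open>e \<in> G\<close>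
proof (induction e rule: wf_induct_rule[OF wf_feeds[OF wf_networkD(1,3)[OF wf]]])
  case (1 e)
  show ?case
  proof (cases "e \<in> edges N")
    case False
    then show ?thesis by (simp add: edge_msg_nonedge[OF wf])
  next
    case e: True
    consider "edge_msg N c m k e = edge_msg N c m' k' e"
      | "tl N e \<in> sources N" "m (tl N e) = m' (tl N e)" "k (tl N e) = k' (tl N e)"
      | "tl N e \<notin> sources N" "in_edges N (tl N e) \<subseteq> G"
      using closed[OF "1.prems" e] by blast
    then show ?thesis
    proof cases
      case 3
      have "restr (in_edges N (tl N e)) (edge_msg N c m k)
          = restr (in_edges N (tl N e)) (edge_msg N c m' k')"
        using 3 e by (auto simp: restr_def fun_eq_iff intro!: "1.IH" in_edges_feeds)
      with 3 e show ?thesis by (simp add: edge_msg_edge[OF wf])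
    qed (simp_all add: edge_msg_edge[OF wf e])
  qed
qed

lemma edge_msg_agree_D_set:
  assumes wf: "wf_network N"
    and agree: "\<And>\<sigma>. \<sigma> \<in> D_set N W \<Longrightarrow> m \<sigma> = m' \<sigma> \<and> k \<sigma> = k' \<sigma>"
    and "w \<in> W"
  shows "edge_msg N c m k w = edge_msg N c m' k' w"
proof (rule edge_msg_agree_upstream_closed[OF wf])
  define G where "G = {e. \<forall>\<sigma>\<in>sources N. reaches_edge N \<sigma> e \<longrightarrow> \<sigma> \<in> D_set N W}"
  show "w \<in> G" unfolding G_def D_set_def using \<open>w \<in> W\<close> by blast
  fix e assume eG: "e \<in> G" and e: "e \<in> edges N"
  have "reaches_edge N (tl N e) e"
    using e unfolding reaches_edge_def path_in_def by (intro exI[of _ "[e]"]) simp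
  moreover have "in_edges N (tl N e) \<subseteq> G"
  proof
    fix d assume d: "d \<in> in_edges N (tl N e)"
    have "reaches_edge N \<sigma> e" if reach: "reaches_edge N \<sigma> d" for \<sigma>
    proof -
      obtain es where es: "path_in N (edges N) es" "tl N (List.hd es) = \<sigma>" "List.last es = d"
        using reach unfolding reaches_edge_def by blast
      then have "path_in N (edges N) (es @ [e])"
        using d e by (intro path_in_snoc) (auto simp: in_edges_def)
      with es show ?thesis
        unfolding reaches_edge_def path_in_def by (intro exI[of _ "es @ [e]"]) auto
    qed
    with eG show "d \<in> G" unfolding G_def by blast
  qed
  ultimately show "edge_msg N c m k e = edge_msg N c m' k' e \<or>
      (tl N e \<in> sources N \<and> m (tl N e) = m' (tl N e) \<and> k (tl N e) = k' (tl N e)) \<or>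
      (tl N e \<notin> sources N \<and> in_edges N (tl N e) \<subseteq> G)"
    using eG agree unfolding G_def by blast
qed

text \<open>A source starting a C-avoiding path to the sink is not in I_C.\<close>
lemma sink_inputs_agree:
  assumes wf: "wf_network N"
    and agree_C: "\<And>e. e \<in> C \<Longrightarrow> edge_msg N c m k e = edge_msg N c m' k' e"
    and agree: "\<And>\<sigma>. \<sigma> \<in> sources N - I_set N C \<Longrightarrow> m \<sigma> = m' \<sigma> \<and> k \<sigma> = k' \<sigma>"
  shows "restr (in_edges N (sink N)) (edge_msg N c m k)
       = restr (in_edges N (sink N)) (edge_msg N c m' k')"
proof -
  define G where "G = C \<union>
    {e. \<exists>es. path_in N (edges N - C) es \<and> List.hd es = e \<and> hd N (List.last es) = sink N}"
  have "edge_msg N c m k d = edge_msg N c m' k' d" if "d \<in> in_edges N (sink N)" for d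
  proof (rule edge_msg_agree_upstream_closed[OF wf])
    show "d \<in> G"
      using that unfolding G_def path_in_def in_edges_def
      by (cases "d \<in> C") (auto intro!: exI[of _ "[d]"])
    fix e assume eG: "e \<in> G" and e: "e \<in> edges N"
    show "edge_msg N c m k e = edge_msg N c m' k' e \<or>
        (tl N e \<in> sources N \<and> m (tl N e) = m' (tl N e) \<and> k (tl N e) = k' (tl N e)) \<or>
        (tl N e \<notin> sources N \<and> in_edges N (tl N e) \<subseteq> G)"
    proof (cases "e \<in> C")
      case False
      then obtain es where es: "path_in N (edges N - C) es" "List.hd es = e"
          "hd N (List.last es) = sink N"
        using eG unfolding G_def by blast
      then have "node_path_in N (edges N - C) (tl N e) (sink N)"
        unfolding node_path_in_def by blast
      moreover have "in_edges N (tl N e) \<subseteq> G"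
      proof
        fix d assume d: "d \<in> in_edges N (tl N e)"
        show "d \<in> G"
        proof (cases "d \<in> C")
          case False
          with d es have "path_in N (edges N - C) (d # es)"
            by (intro path_in_Cons) (auto simp: in_edges_def)
          with es show ?thesis
            unfolding G_def by (auto simp: path_in_def intro!: exI[of _ "d # es"])
        qed (simp add: G_def)
      qed
      ultimately show ?thesis
        using agree unfolding I_set_def by blast
    qed (simp add: agree_C)
  qed
  then show ?thesis by (auto simp: restr_def)
qed

lemma mult_log_ratio_ge:
  fixes p q :: real
  assumes "0 < p" "0 < q"
  shows "(p - q) / ln 2 \<le> p * log 2 (p / q)"
proof -
  have "ln (q / p) \<le> q / p - 1"
    using assms by (intro ln_le_minus_one) simp
  moreover have "ln (p / q) = - ln (q / p)"
    using assms by (simp add: ln_div)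
  ultimately have "p * (1 - q / p) \<le> p * ln (p / q)"
    using assms(1) by (intro mult_left_mono) auto
  moreover have "p * (1 - q / p) = p - q"
    using assms(1) by (simp add: field_simps)
  ultimately have "p - q \<le> p * ln (p / q)"
    by simp
  then show ?thesis
    by (simp add: log_def divide_right_mono)
qed

lemma uprob_pos: "finite \<Omega> \<Longrightarrow> \<omega> \<in> \<Omega> \<Longrightarrow> P \<omega> \<Longrightarrow> 0 < uprob \<Omega> P"
  unfolding uprob_def by (auto simp: card_gt_0_iff intro!: divide_pos_pos)

lemma uprob_nonneg: "0 \<le> uprob \<Omega> P"
  unfolding uprob_def by simp

lemma sum_uprob_fibres:
  assumes "finite \<Omega>" "\<Omega> \<noteq> {}"
  shows "(\<Sum>z\<in>Z ` \<Omega>. uprob \<Omega> (\<lambda>\<omega>. Z \<omega> = z)) = 1"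
proof -
  have "card \<Omega> = card (\<Union>z\<in>Z ` \<Omega>. {\<omega>\<in>\<Omega>. Z \<omega> = z})"
    by (rule arg_cong[of _ _ card]) auto
  also have "\<dots> = (\<Sum>z\<in>Z ` \<Omega>. card {\<omega>\<in>\<Omega>. Z \<omega> = z})"
    using assms(1) by (intro card_UN_disjoint) auto
  finally have "real (card \<Omega>) = (\<Sum>z\<in>Z ` \<Omega>. real (card {\<omega>\<in>\<Omega>. Z \<omega> = z}))"
    by simp
  moreover have "card \<Omega> \<noteq> 0"
    using assms by simp
  ultimately show ?thesis
    unfolding uprob_def by (simp add: sum_divide_distrib[symmetric])
qed

text \<open>Gibbs' inequality, via p log(p/q) \<ge> (p - q)/ln 2, makes the mutual information positive
  as soon as some product of attained marginal values has joint probability 0.\<close>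
lemma mutual_info_zero_imp_joint_value:
  assumes fin: "finite \<Omega>" and mi: "mutual_info \<Omega> X Y = 0"
    and a: "a \<in> \<Omega>" and b: "b \<in> \<Omega>"
  shows "\<exists>\<omega>\<in>\<Omega>. X \<omega> = X a \<and> Y \<omega> = Y b"
proof (rule ccontr)
  assume no_joint: "\<not> ?thesis"
  have ne: "\<Omega> \<noteq> {}" using a by blast
  define P where "P = (\<lambda>\<omega>. (X \<omega>, Y \<omega>)) ` \<Omega>"
  define p where "p = (\<lambda>x y. uprob \<Omega> (\<lambda>\<omega>. X \<omega> = x \<and> Y \<omega> = y))"
  define px where "px = (\<lambda>x. uprob \<Omega> (\<lambda>\<omega>. X \<omega> = x))"
  define py where "py = (\<lambda>y. uprob \<Omega> (\<lambda>\<omega>. Y \<omega> = y))"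
  have pos: "0 < p x y" "0 < px x * py y" if "(x, y) \<in> P" for x y
    using that fin by (auto simp: P_def p_def px_def py_def intro!: uprob_pos mult_pos_pos)
  have sum_p: "(\<Sum>(x, y)\<in>P. p x y) = 1"
    using sum_uprob_fibres[OF fin ne, of "\<lambda>\<omega>. (X \<omega>, Y \<omega>)"]
    unfolding P_def p_def by (simp add: case_prod_unfold prod_eq_iff)
  have "mutual_info \<Omega> X Y = (\<Sum>(x, y)\<in>P. p x y * log 2 (p x y / (px x * py y)))"
    unfolding mutual_info_def P_def p_def px_def py_def by simp
  then have "(\<Sum>(x, y)\<in>P. (p x y - px x * py y) / ln 2) \<le> mutual_info \<Omega> X Y"
    using pos mult_log_ratio_ge by (auto intro!: sum_mono)
  then have "(\<Sum>(x, y)\<in>P. p x y) - (\<Sum>(x, y)\<in>P. px x * py y) \<le> 0"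
    using mi by (simp add: sum_divide_distrib[symmetric] sum_subtractf case_prod_unfold
        divide_le_0_iff)
  then have product_mass: "1 \<le> (\<Sum>(x, y)\<in>P. px x * py y)"
    using sum_p by simp
  define Q where "Q = X ` \<Omega> \<times> Y ` \<Omega>"
  have ab: "(X a, Y b) \<in> Q"
    using a b by (simp add: Q_def)
  have "(\<Sum>(x, y)\<in>P. px x * py y) \<le> (\<Sum>(x, y)\<in>Q - {(X a, Y b)}. px x * py y)"
  proof (rule sum_mono2)
    show "P \<subseteq> Q - {(X a, Y b)}"
      using no_joint by (auto simp: P_def Q_def)
  qed (use fin in \<open>auto simp: Q_def px_def py_def uprob_nonneg\<close>)
  also have "\<dots> = (\<Sum>(x, y)\<in>Q. px x * py y) - px (X a) * py (Y b)"
    using fin ab by (simp add: Q_def sum_diff1)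
  also have "(\<Sum>(x, y)\<in>Q. px x * py y) = (\<Sum>x\<in>X ` \<Omega>. px x) * (\<Sum>y\<in>Y ` \<Omega>. py y)"
    unfolding Q_def by (simp add: sum_product sum.cartesian_product)
  also have "\<dots> = 1"
    using sum_uprob_fibres[OF fin ne, of X] sum_uprob_fibres[OF fin ne, of Y]
    by (simp add: px_def py_def)
  finally have "(\<Sum>(x, y)\<in>P. px x * py y) \<le> 1 - px (X a) * py (Y b)" .
  moreover have "0 < px (X a) * py (Y b)"
    unfolding px_def py_def using fin a b by (intro mult_pos_pos uprob_pos) auto
  ultimately show False
    using product_mass by linarith
qed

lemma alg_sum_update_inj:
  assumes "finite (sources N)" "\<sigma> \<in> sources N" "length s = l" "length s' = l"
    and "alg_sum N l (m(\<sigma> := s)) = alg_sum N l (m(\<sigma> := s'))"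
  shows "s = s'"
proof (rule nth_equalityI)
  show "length s = length s'" using assms(3,4) by simp
  fix j assume "j < length s"
  then have "alg_sum N l (m(\<sigma> := s)) ! j = alg_sum N l (m(\<sigma> := s')) ! j"
    using assms(5) by simp
  moreover have "alg_sum N l (m(\<sigma> := t)) ! j = t ! j + (\<Sum>\<tau>\<in>sources N - {\<sigma>}. m \<tau> ! j)" for t
    using \<open>j < length s\<close> assms(1-3)
    by (auto simp: alg_sum_def sum.remove[OF assms(1,2)] intro!: sum.cong)
  ultimately show "s ! j = s' ! j" by simp
qed

lemma finite_sample_space:
  fixes c :: "('v, 'e, 'f::finite) scode"
  assumes "finite (sources N)" "\<And>\<sigma>. \<sigma> \<in> sources N \<Longrightarrow> finite (keys c \<sigma>)"
  shows "finite (sample_space N c l)"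
proof -
  let ?M = "{m. \<forall>\<sigma>. (\<sigma> \<in> sources N \<longrightarrow> m \<sigma> \<in> {xs :: 'f list. length xs = l})
      \<and> (\<sigma> \<notin> sources N \<longrightarrow> m \<sigma> = [])}"
  let ?K = "{k. \<forall>\<sigma>. (\<sigma> \<in> sources N \<longrightarrow> k \<sigma> \<in> (\<Union>\<tau>\<in>sources N. keys c \<tau>))
      \<and> (\<sigma> \<notin> sources N \<longrightarrow> k \<sigma> = 0)}"
  have "finite ?M"
    using assms(1) finite_lists_length_eq[of "UNIV :: 'f set" l]
    by (intro finite_set_of_finite_funs) auto
  moreover have "finite ?K"
    using assms by (intro finite_set_of_finite_funs) auto
  moreover have "sample_space N c l \<subseteq> ?M \<times> ?K"
    unfolding sample_space_def by auto
  ultimately show ?thesis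
    by (meson finite_SigmaI finite_subset)
qed

lemma inj_lists_into_PiE_imp_le:
  fixes \<phi> :: "'f::finite list \<Rightarrow> 'a \<Rightarrow> 'f list"
  assumes "finite A" "1 < card (UNIV :: 'f set)"
    and "inj_on \<phi> {xs. length xs = l}"
    and "\<phi> ` {xs. length xs = l} \<subseteq> A \<rightarrow>\<^sub>E {xs. length xs = n}"
  shows "l \<le> n * card A"
proof -
  have lists: "card {xs :: 'f list. length xs = k} = card (UNIV :: 'f set) ^ k" for k
    using card_lists_length_eq[of "UNIV :: 'f set" k] by simp
  have "finite (A \<rightarrow>\<^sub>E {xs :: 'f list. length xs = n})"
    using assms(1) finite_lists_length_eq[of "UNIV :: 'f set" n] by (intro finite_PiE) auto
  then have "card {xs :: 'f list. length xs = l} \<le> card (A \<rightarrow>\<^sub>E {xs :: 'f list. length xs = n})"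
    using assms(3,4) by (rule card_inj_on_le[rotated 2])
  then have "card (UNIV :: 'f set) ^ l \<le> card (UNIV :: 'f set) ^ (n * card A)"
    using assms(1) by (simp add: lists card_PiE power_mult)
  then show ?thesis
    using assms(2) by (rule power_le_imp_le_exp[rotated])
qed

lemma length_edge_msg:
  assumes "wf_network N" "admissible N r l n c" "e \<in> edges N"
  shows "length (edge_msg N c m k e) = n"
  using assms by (simp add: edge_msg_edge admissible_def)

lemma finite_Lambda_set:
  assumes "wf_network N" "C \<in> Lambda_set N"
  shows "finite C"
proof (rule finite_subset)
  show "C \<subseteq> edges N" using assms(2) by (simp add: Lambda_set_def)
qed (rule wf_networkD(1)[OF assms(1)])

lemma admissible_finite_sample_space:
  "wf_network N \<Longrightarrow> admissible N r l n c \<Longrightarrow> finite (sample_space N c l)"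
  by (intro finite_sample_space wf_networkD(2)) (auto simp: admissible_def)

text \<open>Keys outside I can be reset to k0 because W only sees the sources in D_W \<subseteq> I.\<close>
lemma admissible_keys_reproducing_W:
  assumes wf: "wf_network N" and adm: "admissible N r l n c"
    and W: "W \<in> W_set N r" and DI: "D_set N W \<subseteq> I"
    and base: "(m0, k0) \<in> sample_space N c l" and m: "(m, k0) \<in> sample_space N c l"
  shows "\<exists>k. (m, k) \<in> sample_space N c l \<and> (\<forall>\<sigma>. \<sigma> \<notin> I \<longrightarrow> k \<sigma> = k0 \<sigma>) \<and>
    restr W (edge_msg N c m k) = restr W (edge_msg N c m0 k0)"
proof -
  have "mutual_info (sample_space N c l)
      (\<lambda>(m, k). restr W (edge_msg N c m k)) (\<lambda>(m, k). m) = 0"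
    using adm W by (simp add: admissible_def)
  from mutual_info_zero_imp_joint_value[OF admissible_finite_sample_space[OF wf adm] this base m]
  obtain k' where k': "(m, k') \<in> sample_space N c l"
      "restr W (edge_msg N c m k') = restr W (edge_msg N c m0 k0)"
    by force
  define k where "k = (\<lambda>\<sigma>. if \<sigma> \<in> I then k' \<sigma> else k0 \<sigma>)"
  have "(m, k) \<in> sample_space N c l"
    using k'(1) m unfolding sample_space_def k_def by auto
  moreover have "restr W (edge_msg N c m k) = restr W (edge_msg N c m k')"
    using DI by (auto simp: restr_def k_def fun_eq_iff intro!: edge_msg_agree_D_set[OF wf])
  ultimately show ?thesis
    using k'(2) by (auto simp: k_def)
qed

lemma field_card_gt_1: "1 < card (UNIV :: 'f::{finite,field} set)"
proof -
  have "card {0 :: 'f, 1} \<le> card (UNIV :: 'f set)"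
    by (rule card_mono) auto
  then show ?thesis by simp
qed

lemma admissible_sample_space_nonempty:
  assumes "admissible N r l n c"
  obtains m k where "(m, k) \<in> sample_space N c l"
proof
  have "keys c \<sigma> \<noteq> {}" if "\<sigma> \<in> sources N" for \<sigma>
    using assms that by (simp add: admissible_def)
  then show "(\<lambda>\<sigma>. if \<sigma> \<in> sources N then replicate l 0 else [],
      \<lambda>\<sigma>. if \<sigma> \<in> sources N then SOME x. x \<in> keys c \<sigma> else 0) \<in> sample_space N c l"
    unfolding sample_space_def by (auto simp: some_in_eq)
qed

lemma sample_space_update_message:
  "(m, k) \<in> sample_space N c l \<Longrightarrow> \<sigma> \<in> sources N \<Longrightarrow> length s = l \<Longrightarrow>
    (m(\<sigma> := s), k) \<in> sample_space N c l"
  unfolding sample_space_def by auto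

lemma admissible_alg_sum_agree:
  assumes wf: "wf_network N" and adm: "admissible N r l n c"
    and "(m, k) \<in> sample_space N c l" "(m', k') \<in> sample_space N c l"
    and "\<And>e. e \<in> C \<Longrightarrow> edge_msg N c m k e = edge_msg N c m' k' e"
    and "\<And>\<sigma>. \<sigma> \<in> sources N - I_set N C \<Longrightarrow> m \<sigma> = m' \<sigma> \<and> k \<sigma> = k' \<sigma>"
  shows "alg_sum N l m = alg_sum N l m'"
proof -
  have computes: "dec c (restr (in_edges N (sink N)) (edge_msg N c m k)) = alg_sum N l m"
    if "(m, k) \<in> sample_space N c l" for m k
    using adm that unfolding admissible_def by blast
  show ?thesis
    using computes[OF assms(3)] computes[OF assms(4)] sink_inputs_agree[OF wf assms(5,6)]
    by simp
qed

lemma admissible_keys_reproducing_W_family: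
  assumes wf: "wf_network N" and adm: "admissible N r l n c"
    and W: "W \<in> W_set N r" and DI: "D_set N W \<subseteq> I"
    and base: "(m0, k0) \<in> sample_space N c l" and \<sigma>: "\<sigma> \<in> sources N"
  obtains ks where "\<And>s. length s = l \<Longrightarrow> (m0(\<sigma> := s), ks s) \<in> sample_space N c l"
    and "\<And>s \<tau>. length s = l \<Longrightarrow> \<tau> \<notin> I \<Longrightarrow> ks s \<tau> = k0 \<tau>"
    and "\<And>s. length s = l \<Longrightarrow>
      restr W (edge_msg N c (m0(\<sigma> := s)) (ks s)) = restr W (edge_msg N c m0 k0)"
proof -
  have "\<forall>s\<in>{s. length s = l}. \<exists>k. (m0(\<sigma> := s), k) \<in> sample_space N c l \<and>
      (\<forall>\<tau>. \<tau> \<notin> I \<longrightarrow> k \<tau> = k0 \<tau>) \<and>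
      restr W (edge_msg N c (m0(\<sigma> := s)) k) = restr W (edge_msg N c m0 k0)"
    using admissible_keys_reproducing_W[OF wf adm W DI base]
      sample_space_update_message[OF base \<sigma>] by blast
  from bchoice[OF this] obtain ks where ks: "\<forall>s\<in>{s. length s = l}.
      (m0(\<sigma> := s), ks s) \<in> sample_space N c l \<and> (\<forall>\<tau>. \<tau> \<notin> I \<longrightarrow> ks s \<tau> = k0 \<tau>) \<and>
      restr W (edge_msg N c (m0(\<sigma> := s)) (ks s)) = restr W (edge_msg N c m0 k0)"
    by blast
  show thesis
    by (rule that[of ks]) (use ks in simp_all)
qed

lemma admissible_length_le:
  fixes c :: "('v, 'e, 'f::{finite,field}) scode"
  assumes wf: "wf_network N" and adm: "admissible N r l n c"
    and W: "W \<in> W_set N r" and C: "C \<in> Lambda_set N" and "W \<subseteq> C"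
    and DI: "D_set N W \<subseteq> I_set N C"
  shows "l \<le> n * card (C - W)"
proof -
  let ?\<Omega> = "sample_space N c l"
  let ?L = "{xs :: 'f list. length xs = l}"
  obtain \<sigma>0 where \<sigma>0: "\<sigma>0 \<in> I_set N C"
    using C unfolding Lambda_set_def by blast
  then have \<sigma>0_source: "\<sigma>0 \<in> sources N"
    unfolding I_set_def by blast
  obtain m0 k0 where base: "(m0, k0) \<in> ?\<Omega>"
    using admissible_sample_space_nonempty[OF adm] .
  obtain ks where ks: "\<And>s. length s = l \<Longrightarrow> (m0(\<sigma>0 := s), ks s) \<in> ?\<Omega>"
      "\<And>s \<sigma>. length s = l \<Longrightarrow> \<sigma> \<notin> I_set N C \<Longrightarrow> ks s \<sigma> = k0 \<sigma>"
      "\<And>s. length s = l \<Longrightarrow>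
        restr W (edge_msg N c (m0(\<sigma>0 := s)) (ks s)) = restr W (edge_msg N c m0 k0)"
    using admissible_keys_reproducing_W_family[OF wf adm W DI base \<sigma>0_source] by metis
  define \<phi> where "\<phi> = (\<lambda>s. restrict (edge_msg N c (m0(\<sigma>0 := s)) (ks s)) (C - W))"
  have "inj_on \<phi> ?L"
  proof
    fix s s' assume "s \<in> ?L" "s' \<in> ?L" and \<phi>_eq: "\<phi> s = \<phi> s'"
    then have s: "length s = l" and s': "length s' = l"
      by simp_all
    have "edge_msg N c (m0(\<sigma>0 := s)) (ks s) e = edge_msg N c (m0(\<sigma>0 := s')) (ks s') e"
      if "e \<in> C" for e
      using \<phi>_eq ks(3)[OF s] ks(3)[OF s'] that unfolding \<phi>_def restr_def
      by (cases "e \<in> W") (auto dest!: fun_cong[of _ _ e])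
    moreover have "(m0(\<sigma>0 := s)) \<sigma> = (m0(\<sigma>0 := s')) \<sigma> \<and> ks s \<sigma> = ks s' \<sigma>"
      if "\<sigma> \<in> sources N - I_set N C" for \<sigma>
      using that \<sigma>0 ks(2)[OF s] ks(2)[OF s'] by auto
    ultimately have "alg_sum N l (m0(\<sigma>0 := s)) = alg_sum N l (m0(\<sigma>0 := s'))"
      by (intro admissible_alg_sum_agree[OF wf adm ks(1)[OF s] ks(1)[OF s']])
    then show "s = s'"
      by (rule alg_sum_update_inj[OF wf_networkD(2)[OF wf] \<sigma>0_source s s'])
  qed
  moreover have "\<phi> ` ?L \<subseteq> (C - W) \<rightarrow>\<^sub>E {xs. length xs = n}"
    using C length_edge_msg[OF wf adm] unfolding \<phi>_def Lambda_set_def by auto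
  moreover have "finite (C - W)"
    using finite_Lambda_set[OF wf C] by simp
  ultimately show ?thesis
    using field_card_gt_1 by (intro inj_lists_into_PiE_imp_le)
qed

text \<open>The sink has an input edge; a feeds-minimal edge upstream of it starts at a source.\<close>
lemma wf_network_sources_nonempty:
  assumes wf: "wf_network N"
  shows "sources N \<noteq> {}"
proof -
  have "in_edges N (sink N) \<noteq> {}"
    using wf_networkD(7)[OF wf wf_networkD(4)[OF wf]] wf_networkD(5)[OF wf] by simp
  then obtain e0 where "e0 \<in> edges N"
    unfolding in_edges_def by blast
  then obtain e where e: "e \<in> edges N" and minimal: "\<And>d. (d, e) \<in> feeds N \<Longrightarrow> d \<notin> edges N"
    using wfE_min[OF wf_feeds[OF wf_networkD(1,3)[OF wf]]] by blast
  have "d \<notin> in_edges N (tl N e)" for d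
    using minimal[of d] in_edges_feeds[OF e, of d] by (auto simp: in_edges_def)
  then have "in_edges N (tl N e) = {}"
    by blast
  then have "tl N e \<in> sources N"
    using wf_networkD(7)[OF wf wf_networkD(6)[OF wf e]] by simp
  then show ?thesis by blast
qed

lemma le_cut_bound:
  assumes wf: "wf_network N"
    and le: "\<And>W C. W \<in> W_set N r \<Longrightarrow> C \<in> Lambda_set N \<Longrightarrow> W \<subseteq> C \<Longrightarrow>
      D_set N W \<subseteq> I_set N C \<Longrightarrow> R \<le> real (card C) - real (card W)"
  shows "R \<le> cut_bound N r"
proof -
  define A where "A = {real (card C) - real (card W) | W C.
      W \<in> W_set N r \<and> C \<in> Lambda_set N \<and> W \<subseteq> C \<and> D_set N W \<subseteq> I_set N C}"
  have "A \<subseteq> (\<lambda>(W, C). real (card C) - real (card W)) ` (Pow (edges N) \<times> Pow (edges N))"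
    unfolding A_def W_set_def Lambda_set_def by auto
  then have "finite A"
    by (rule finite_subset) (use wf_networkD(1)[OF wf] in simp)
  \<comment> \<open>so that Min is not taken over the empty set\<close>
  moreover have "real (card (edges N)) - real (card {}) \<in> A"
  proof -
    obtain \<sigma> where "\<sigma> \<in> sources N"
      using wf_network_sources_nonempty[OF wf] by blast
    then have "edges N \<in> Lambda_set N"
      unfolding Lambda_set_def I_set_def node_path_in_def path_in_def by auto
    then show ?thesis
      unfolding A_def W_set_def D_set_def by force
  qed
  moreover have "\<forall>a\<in>A. R \<le> a"
    unfolding A_def using le by blast
  ultimately have "R \<le> Min A"
    by (subst Min_ge_iff) auto
  then show ?thesis
    unfolding cut_bound_def A_def .
qed

lemma achievable_le:
  assumes "achievable TYPE('f::{finite,field}) N r R"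
    and "\<And>l n (c :: ('v, 'e, 'f) scode). admissible N r l n c \<Longrightarrow> real l \<le> real n * b"
  shows "R \<le> b"
proof (rule ccontr)
  assume "\<not> R \<le> b"
  then have "0 < R - b" by simp
  then obtain l n and c :: "('v, 'e, 'f) scode"
    where adm: "admissible N r l n c" and rate: "R - (R - b) < real l / real n"
    using assms(1) unfolding achievable_def by blast
  have "0 < n"
    using adm by (simp add: admissible_def)
  then show False
    using assms(2)[OF adm] rate by (simp add: field_simps)
qed

theorem theorem1:
  fixes N :: "('v, 'e) network" and r :: nat and R :: real
  assumes "wf_network N"
    and "achievable TYPE('f::{finite,field}) N r R"
  shows "R \<le> cut_bound N r"
proof (rule le_cut_bound[OF assms(1)])
  fix W C
  assume "W \<in> W_set N r" and C: "C \<in> Lambda_set N" and "W \<subseteq> C"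
    and "D_set N W \<subseteq> I_set N C"
  then have "l \<le> n * card (C - W)" if "admissible N r l n c" for l n and c :: "('v, 'e, 'f) scode"
    using admissible_length_le[OF assms(1) that] by blast
  then have "R \<le> real (card (C - W))"
    by (intro achievable_le[OF assms(2)]) (simp flip: of_nat_mult)
  moreover have "finite C"
    using finite_Lambda_set[OF assms(1) C] .
  ultimately show "R \<le> real (card C) - real (card W)"
    using \<open>W \<subseteq> C\<close> by (simp add: card_Diff_subset card_mono finite_subset of_nat_diff)
qed

end
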